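(* Let $\mathbb F$ be a field that is not the field with two elements. Let $V\subset\mathbb F^{n\times n}$ and $V'\subset\mathbb F^{n'\times n'}$ be vector spaces of pairwise commuting matrices, each containing a nonsingular matrix. Then the following are equivalent: (i) the Lie algebras $\mathrm L(V)$ and $\mathrm L(V')$ are isomorphic; (ii) $n=n'$ and $SVS^{-1}=V'$ for some nonsingular $S\in\mathbb F^{n\times n}$; (iii) $n=n'$ and $R\widetilde V R^{-1}=\widetilde{V'}$ for some nonsingular $R\in\mathbb F^{(n+1)\times(n+1)}$.
   Context: For a vector space $V\subset\mathbb F^{n\times n}$ of commuting matrices, $\widetilde V$ denotes the vector space of all $(n+1)\times(n+1)$ matrices $(A|a):=\begin{bmatrix}A&a\\0&0\end{bmatrix}$ with $A\in V$, $a\in\mathbb F^n$ (a column), and zero last row. $\mathrm L(V)$ is the Lie algebra $\widetilde V$ with bracket $[u,v]=uv-vu$, i.e. $[(A|a),(B|b)]=(0\,|\,Ab-Ba)$. *)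

theory Defs
  imports "Jordan_Normal_Form.Matrix"
begin

definition comm_mat_space :: "nat \<Rightarrow> 'a::field mat set \<Rightarrow> bool" where
  "comm_mat_space n V \<longleftrightarrow>
     V \<subseteq> carrier_mat n n \<and>
     0\<^sub>m n n \<in> V \<and>
     (\<forall>A\<in>V. \<forall>B\<in>V. A + B \<in> V) \<and>
     (\<forall>c. \<forall>A\<in>V. c \<cdot>\<^sub>m A \<in> V) \<and>
     (\<forall>A\<in>V. \<forall>B\<in>V. A * B = B * A)"

text \<open>The (n+1) x (n+1) matrix (A|a) = [[A, a], [0, 0]].\<close>
definition aug_mat :: "nat \<Rightarrow> 'a::field mat \<Rightarrow> 'a vec \<Rightarrow> 'a mat" where
  "aug_mat n A a = mat (n+1) (n+1)
     (\<lambda>(i,j). if i < n then (if j < n then A $$ (i,j) else a $ i) else 0)"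

definition tilde :: "nat \<Rightarrow> 'a::field mat set \<Rightarrow> 'a mat set" where
  "tilde n V = {aug_mat n A a | A a. A \<in> V \<and> a \<in> carrier_vec n}"

definition lie_iso :: "('a::field mat \<Rightarrow> 'a mat) \<Rightarrow> 'a mat set \<Rightarrow> 'a mat set \<Rightarrow> bool" where
  "lie_iso \<phi> U W \<longleftrightarrow>
     bij_betw \<phi> U W \<and>
     (\<forall>x\<in>U. \<forall>y\<in>U. \<phi> (x + y) = \<phi> x + \<phi> y) \<and>
     (\<forall>c. \<forall>x\<in>U. \<phi> (c \<cdot>\<^sub>m x) = c \<cdot>\<^sub>m \<phi> x) \<and>
     (\<forall>x\<in>U. \<forall>y\<in>U. \<phi> (x * y - y * x) = \<phi> x * \<phi> y - \<phi> y * \<phi> x)"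

definition lie_isomorphic :: "'a::field mat set \<Rightarrow> 'a mat set \<Rightarrow> bool" where
  "lie_isomorphic U W \<longleftrightarrow> (\<exists>\<phi>. lie_iso \<phi> U W)"

end

theory Submission
  imports Defs "Jordan_Normal_Form.Determinant"
begin

text \<open>If V contains a nonsingular matrix A, every (0|c) is the bracket of (A|0) with (0|A^-1 c),
  so the set of brackets of L(V) is the abelian ideal N = {(0|c)}, a copy of F^n. A Lie
  isomorphism \<phi> : L(V) \<rightarrow> L(V') therefore maps N onto N' and induces a linear bijection
  \<sigma> : F^n \<rightarrow> F^n', so n = n' and \<sigma> is given by a nonsingular S. Writing
  \<phi>(A|0) = (\<rho>(A)|p), the bracket [(A|0),(0|b)] = (0|Ab) is carried to \<sigma>(Ab) = \<rho>(A)\<sigma>(b),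
  that is S A S^-1 = \<rho>(A), and \<rho> maps V onto V'. Conversely S gives the conjugation by
  diag(S,1) of V-tilde onto V'-tilde, and every conjugation is a Lie isomorphism.\<close>

definition aug_block :: "nat \<Rightarrow> 'a mat \<Rightarrow> 'a mat" where
  "aug_block n X = mat n n (\<lambda>ij. X $$ ij)"

definition aug_col :: "nat \<Rightarrow> 'a mat \<Rightarrow> 'a vec" where
  "aug_col n X = vec n (\<lambda>i. X $$ (i, n))"

lemma aug_mat_carrier [simp]: "aug_mat n A a \<in> carrier_mat (n+1) (n+1)"
  and dim_aug_mat [simp]: "dim_row (aug_mat n A a) = n+1" "dim_col (aug_mat n A a) = n+1"
  unfolding aug_mat_def by auto

lemma index_aug_mat:
  "i < n+1 \<Longrightarrow> j < n+1 \<Longrightarrow>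
   aug_mat n A a $$ (i,j) = (if i < n then if j < n then A $$ (i,j) else a $ i else 0)"
  unfolding aug_mat_def by auto

lemma aug_block_aug_mat [simp]: "A \<in> carrier_mat n n \<Longrightarrow> aug_block n (aug_mat n A a) = A"
  unfolding aug_block_def by (auto simp: index_aug_mat)

lemma aug_col_aug_mat [simp]: "a \<in> carrier_vec n \<Longrightarrow> aug_col n (aug_mat n A a) = a"
  unfolding aug_col_def by (auto simp: index_aug_mat)

lemma aug_mat_inject:
  assumes "A \<in> carrier_mat n n" "B \<in> carrier_mat n n" "a \<in> carrier_vec n" "b \<in> carrier_vec n"
  shows "aug_mat n A a = aug_mat n B b \<longleftrightarrow> A = B \<and> a = b"
  by (metis assms aug_block_aug_mat aug_col_aug_mat)

lemma aug_mat_add: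
  "A \<in> carrier_mat n n \<Longrightarrow> B \<in> carrier_mat n n \<Longrightarrow> a \<in> carrier_vec n \<Longrightarrow> b \<in> carrier_vec n \<Longrightarrow>
   aug_mat n A a + aug_mat n B b = aug_mat n (A + B) (a + b)"
  by (rule eq_matI) (auto simp: index_aug_mat)

lemma aug_mat_smult:
  "A \<in> carrier_mat n n \<Longrightarrow> a \<in> carrier_vec n \<Longrightarrow>
   c \<cdot>\<^sub>m aug_mat n A a = aug_mat n (c \<cdot>\<^sub>m A) (c \<cdot>\<^sub>v a)"
  by (rule eq_matI) (auto simp: index_aug_mat)

lemma aug_mat_mult:
  assumes A: "A \<in> carrier_mat n n" and B: "B \<in> carrier_mat n n" and b: "b \<in> carrier_vec n"
  shows "aug_mat n A a * aug_mat n B b = aug_mat n (A * B) (A *\<^sub>v b)"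
proof (rule eq_matI)
  fix i j assume "i < dim_row (aug_mat n (A * B) (A *\<^sub>v b))" "j < dim_col (aug_mat n (A * B) (A *\<^sub>v b))"
  hence i: "i < n+1" and j: "j < n+1" by auto
  \<comment> \<open>the last row of the right factor is zero, so only the first n summands survive\<close>
  have "(aug_mat n A a * aug_mat n B b) $$ (i,j) =
        (\<Sum>k<n. aug_mat n A a $$ (i,k) * aug_mat n B b $$ (k,j))"
    using i j by (simp add: scalar_prod_def lessThan_atLeast0 index_aug_mat)
  also have "\<dots> = aug_mat n (A * B) (A *\<^sub>v b) $$ (i,j)"
    using i j A B b by (auto simp: index_aug_mat scalar_prod_def lessThan_atLeast0 intro!: sum.cong)
  finally show "(aug_mat n A a * aug_mat n B b) $$ (i,j) = aug_mat n (A * B) (A *\<^sub>v b) $$ (i,j)" .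
qed auto

lemma zero_mat_mult_vec [simp]: "a \<in> carrier_vec m \<Longrightarrow> 0\<^sub>m n m *\<^sub>v a = 0\<^sub>v n"
  by (auto intro!: eq_vecI)

lemma aug_mat_commutator:
  assumes A: "A \<in> carrier_mat n n" and B: "B \<in> carrier_mat n n"
    and a: "a \<in> carrier_vec n" and b: "b \<in> carrier_vec n" and AB: "A * B = B * A"
  shows "aug_mat n A a * aug_mat n B b - aug_mat n B b * aug_mat n A a =
         aug_mat n (0\<^sub>m n n) (A *\<^sub>v b - B *\<^sub>v a)"
  using assms by (simp add: aug_mat_mult) (rule eq_matI, auto simp: index_aug_mat)

lemma tilde_carrier: "tilde n V \<subseteq> carrier_mat (n+1) (n+1)"
  unfolding tilde_def by auto

lemma tildeI: "A \<in> V \<Longrightarrow> a \<in> carrier_vec n \<Longrightarrow> aug_mat n A a \<in> tilde n V"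
  unfolding tilde_def by auto

lemma tildeE:
  assumes "x \<in> tilde n V"
  obtains A a where "x = aug_mat n A a" "A \<in> V" "a \<in> carrier_vec n"
  using assms unfolding tilde_def by auto

lemma tilde_mono: "V \<subseteq> W \<Longrightarrow> tilde n V \<subseteq> tilde n W"
  unfolding tilde_def by auto

definition commutators :: "'a::ring mat set \<Rightarrow> 'a mat set" where
  "commutators U = {x * y - y * x | x y. x \<in> U \<and> y \<in> U}"

lemma lie_iso_image_commutators:
  assumes "lie_iso \<phi> U W"
  shows "\<phi> ` commutators U = commutators W"
proof -
  have im: "\<phi> ` U = W" and br: "\<And>x y. x \<in> U \<Longrightarrow> y \<in> U \<Longrightarrow> \<phi> (x * y - y * x) = \<phi> x * \<phi> y - \<phi> y * \<phi> x"
    using assms unfolding lie_iso_def bij_betw_def by auto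
  show ?thesis
  proof
    show "\<phi> ` commutators U \<subseteq> commutators W"
      unfolding commutators_def using im by (auto simp: br) blast
    show "commutators W \<subseteq> \<phi> ` commutators U"
    proof
      fix z assume "z \<in> commutators W"
      then obtain x y where "x \<in> U" "y \<in> U" "z = \<phi> x * \<phi> y - \<phi> y * \<phi> x"
        unfolding commutators_def im[symmetric] by auto
      then show "z \<in> \<phi> ` commutators U"
        unfolding commutators_def by (auto simp flip: br)
    qed
  qed
qed

lemma invertible_mat_right_inverse:
  assumes "A \<in> carrier_mat n n" "invertible_mat A"
  obtains B where "B \<in> carrier_mat n n" "A * B = 1\<^sub>m n"
proof -
  obtain B where AB: "A * B = 1\<^sub>m n" and BA: "B * A = 1\<^sub>m (dim_row B)"
    using assms unfolding invertible_mat_def inverts_mat_def by auto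
  have "B \<in> carrier_mat n n"
    using arg_cong[OF AB, of dim_col] arg_cong[OF BA, of dim_col] assms(1) by auto
  with AB that show thesis by blast
qed

lemma commutators_tilde:
  assumes V: "comm_mat_space n V" and A: "A \<in> V" "invertible_mat A"
  shows "commutators (tilde n V) = tilde n {0\<^sub>m n n}"
proof
  have Vc: "V \<subseteq> carrier_mat n n" and comm: "\<And>A B. A \<in> V \<Longrightarrow> B \<in> V \<Longrightarrow> A * B = B * A"
    and V0: "0\<^sub>m n n \<in> V"
    using V unfolding comm_mat_space_def by auto
  show "commutators (tilde n V) \<subseteq> tilde n {0\<^sub>m n n}"
  proof
    fix z assume "z \<in> commutators (tilde n V)"
    then obtain B b C c where z: "z = aug_mat n B b * aug_mat n C c - aug_mat n C c * aug_mat n B b"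
      and "B \<in> V" "C \<in> V" "b \<in> carrier_vec n" "c \<in> carrier_vec n"
      unfolding commutators_def by (auto elim!: tildeE)
    with Vc comm have "B \<in> carrier_mat n n" "C \<in> carrier_mat n n" "B * C = C * B" by auto
    with \<open>b \<in> carrier_vec n\<close> \<open>c \<in> carrier_vec n\<close> show "z \<in> tilde n {0\<^sub>m n n}"
      by (subst z, subst aug_mat_commutator) (auto intro!: tildeI)
  qed
  show "tilde n {0\<^sub>m n n} \<subseteq> commutators (tilde n V)"
  proof
    fix z :: "'a mat" assume "z \<in> tilde n {0\<^sub>m n n}"
    then obtain c where z: "z = aug_mat n (0\<^sub>m n n) c" and c: "c \<in> carrier_vec n"
      by (auto elim: tildeE)
    have Ac: "A \<in> carrier_mat n n" using A Vc by auto
    obtain B where B: "B \<in> carrier_mat n n" "A * B = 1\<^sub>m n"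
      using invertible_mat_right_inverse[OF Ac A(2)] .
    have "z = aug_mat n A (0\<^sub>v n) * aug_mat n (0\<^sub>m n n) (B *\<^sub>v c)
            - aug_mat n (0\<^sub>m n n) (B *\<^sub>v c) * aug_mat n A (0\<^sub>v n)"
      using Ac B c by (subst aug_mat_commutator) (auto simp: z simp flip: assoc_mult_mat_vec[OF Ac B(1) c])
    moreover have "aug_mat n A (0\<^sub>v n) \<in> tilde n V" "aug_mat n (0\<^sub>m n n) (B *\<^sub>v c) \<in> tilde n V"
      using A V0 B c by (auto intro: tildeI)
    ultimately show "z \<in> commutators (tilde n V)"
      unfolding commutators_def by blast
  qed
qed

lemma lie_iso_conjugation:
  assumes U: "U \<subseteq> carrier_mat k k" and R: "R \<in> carrier_mat k k" and Q: "Q \<in> carrier_mat k k"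
    and QR: "Q * R = 1\<^sub>m k"
  shows "lie_iso (\<lambda>M. R * M * Q) U ((\<lambda>M. R * M * Q) ` U)"
proof -
  have cancel: "Q * (R * M) = M" if "M \<in> carrier_mat k m" for M m
    using that Q R QR by (simp flip: assoc_mult_mat)
  have inj: "inj_on (\<lambda>M. R * M * Q) U"
  proof (rule inj_on_inverseI)
    fix M assume "M \<in> U"
    with U have "M \<in> carrier_mat k k" by auto
    with Q R QR cancel[of "M * Q" k] show "Q * (R * M * Q) * R = M" by auto
  qed
  have mult: "R * x * Q * (R * y * Q) = R * (x * y) * Q"
    if "x \<in> carrier_mat k k" "y \<in> carrier_mat k k" for x y
    using that Q R cancel[of "y * Q" k] by (simp add: assoc_mult_mat[of _ k k _ k _ k])
  have add: "R * (x + y) * Q = R * x * Q + R * y * Q"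
    if x: "x \<in> carrier_mat k k" and y: "y \<in> carrier_mat k k" for x y
    using x y Q R by (simp add: mult_add_distrib_mat add_mult_distrib_mat[of "R * x" k k "R * y" Q k])
  have commutator: "R * (x * y - y * x) * Q = R * x * Q * (R * y * Q) - R * y * Q * (R * x * Q)"
    if x: "x \<in> carrier_mat k k" and y: "y \<in> carrier_mat k k" for x y
  proof -
    have "R * (x * y - y * x) * Q = R * (x * y) * Q - R * (y * x) * Q"
      using mult_minus_distrib_mat[of R k k "x * y" k "y * x"] x y Q R
        minus_mult_distrib_mat[of "R * (x * y)" k k "R * (y * x)" Q k] by simp
    then show ?thesis by (simp only: mult[OF x y] mult[OF y x])
  qed
  have smult: "R * (c \<cdot>\<^sub>m x) * Q = c \<cdot>\<^sub>m (R * x * Q)" if x: "x \<in> carrier_mat k k" for c x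
    using mult_smult_distrib[OF R x] mult_smult_assoc_mat[of "R * x" k k Q k] x R Q by simp
  show ?thesis
    unfolding lie_iso_def using inj U add commutator smult by (blast intro: inj_on_imp_bij_betw)
qed

lemma eq_matI_mult_vec:
  fixes A B :: "'a::semiring_1 mat"
  assumes "A \<in> carrier_mat m n" "B \<in> carrier_mat m n" "\<And>b. b \<in> carrier_vec n \<Longrightarrow> A *\<^sub>v b = B *\<^sub>v b"
  shows "A = B"
proof (rule eq_matI)
  fix i j assume "i < dim_row B" "j < dim_col B"
  with assms(1,2) have "A $$ (i,j) = (A *\<^sub>v unit_vec n j) $ i" "B $$ (i,j) = (B *\<^sub>v unit_vec n j) $ i"
    by auto
  with assms(3)[of "unit_vec n j"] show "A $$ (i,j) = B $$ (i,j)" by simp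
qed (use assms(1,2) in auto)

lemma linear_vec_map_as_mat:
  fixes f :: "'a::comm_ring_1 vec \<Rightarrow> 'a vec"
  assumes f: "\<And>b. b \<in> carrier_vec n \<Longrightarrow> f b \<in> carrier_vec m"
    and add: "\<And>b c. b \<in> carrier_vec n \<Longrightarrow> c \<in> carrier_vec n \<Longrightarrow> f (b + c) = f b + f c"
    and smult: "\<And>k b. b \<in> carrier_vec n \<Longrightarrow> f (k \<cdot>\<^sub>v b) = k \<cdot>\<^sub>v f b"
  obtains M where "M \<in> carrier_mat m n" "\<And>b. b \<in> carrier_vec n \<Longrightarrow> M *\<^sub>v b = f b"
proof
  define M where "M = mat m n (\<lambda>(i,j). f (unit_vec n j) $ i)"
  show "M \<in> carrier_mat m n" unfolding M_def by auto
  fix b :: "'a vec" assume b: "b \<in> carrier_vec n"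
  define prefix where "prefix k = vec n (\<lambda>j. if j < k then b $ j else 0)" for k
  have "f (0\<^sub>v n) = f (0 \<cdot>\<^sub>v 0\<^sub>v n)" by (auto intro!: arg_cong[of _ _ f])
  also have "\<dots> = 0\<^sub>v m" using smult[of "0\<^sub>v n" 0] f[of "0\<^sub>v n"] by (auto intro!: eq_vecI)
  finally have f0: "f (0\<^sub>v n) = 0\<^sub>v m" .
  have "f (prefix k) = vec m (\<lambda>i. \<Sum>j<k. b $ j * f (unit_vec n j) $ i)" if "k \<le> n" for k
    using that
  proof (induction k)
    case 0
    have "prefix 0 = 0\<^sub>v n" unfolding prefix_def by auto
    with f0 show ?case by auto
  next
    case (Suc k)
    have "prefix (Suc k) = prefix k + b $ k \<cdot>\<^sub>v unit_vec n k"
      unfolding prefix_def using Suc.prems by (auto intro!: eq_vecI simp: less_Suc_eq)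
    then have "f (prefix (Suc k)) = f (prefix k) + b $ k \<cdot>\<^sub>v f (unit_vec n k)"
      by (simp add: add smult prefix_def)
    with Suc f[of "unit_vec n k"] show ?case by (auto intro!: eq_vecI)
  qed
  moreover have "prefix n = b" unfolding prefix_def using b by (auto intro!: eq_vecI)
  ultimately have "f b = vec m (\<lambda>i. \<Sum>j<n. b $ j * f (unit_vec n j) $ i)" by auto
  then show "M *\<^sub>v b = f b"
    unfolding M_def using b by (auto intro!: eq_vecI simp: scalar_prod_def lessThan_atLeast0 mult.commute)
qed

text \<open>Padding A with zero columns and B with zero rows to square matrices A', B' keeps
  A' * B' = 1, hence B' * A' = 1; but the last column of B' * A' is zero.\<close>
lemma right_inverse_mat_dim_le:
  fixes A :: "'a::field mat"
  assumes A: "A \<in> carrier_mat m k" and B: "B \<in> carrier_mat k m" and AB: "A * B = 1\<^sub>m m"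
  shows "m \<le> k"
proof (rule ccontr)
  assume "\<not> m \<le> k"
  then have km: "k < m" by simp
  define A' where "A' = mat m m (\<lambda>(i,j). if j < k then A $$ (i,j) else 0)"
  define B' where "B' = mat m m (\<lambda>(i,j). if i < k then B $$ (i,j) else 0)"
  have A': "A' \<in> carrier_mat m m" and B': "B' \<in> carrier_mat m m" unfolding A'_def B'_def by auto
  have "A' * B' = A * B"
  proof (rule eq_matI)
    fix i j assume "i < dim_row (A * B)" "j < dim_col (A * B)"
    with A B have i: "i < m" and j: "j < m" by auto
    have "(A' * B') $$ (i,j) = (\<Sum>l\<in>{0..<m}. A' $$ (i,l) * B' $$ (l,j))"
      using i j A' B' by (simp add: scalar_prod_def)
    also have "\<dots> = (\<Sum>l\<in>{0..<k}. A' $$ (i,l) * B' $$ (l,j))"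
      using km i j by (intro sum.mono_neutral_right) (auto simp: A'_def B'_def)
    also have "\<dots> = (\<Sum>l\<in>{0..<k}. A $$ (i,l) * B $$ (l,j))"
      using km i j by (intro sum.cong) (auto simp: A'_def B'_def)
    also have "\<dots> = (A * B) $$ (i,j)" using i j A B by (simp add: scalar_prod_def)
    finally show "(A' * B') $$ (i,j) = (A * B) $$ (i,j)" .
  qed (use A B A' B' in auto)
  with AB have "B' * A' = 1\<^sub>m m" using mat_mult_left_right_inverse[OF A' B'] by simp
  then have "(B' * A') $$ (m - 1, m - 1) = 1" using km by simp
  moreover have "(B' * A') $$ (m - 1, m - 1) = 0"
  proof -
    have "\<not> m - 1 < k" using km by simp
    then show ?thesis using km A' B' by (simp add: scalar_prod_def A'_def)
  qed
  ultimately show False by simp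
qed

lemma linear_bij_as_invertible_mat:
  fixes f :: "'a::field vec \<Rightarrow> 'a vec"
  assumes bij: "bij_betw f (carrier_vec n) (carrier_vec m)"
    and add: "\<And>b c. b \<in> carrier_vec n \<Longrightarrow> c \<in> carrier_vec n \<Longrightarrow> f (b + c) = f b + f c"
    and smult: "\<And>k b. b \<in> carrier_vec n \<Longrightarrow> f (k \<cdot>\<^sub>v b) = k \<cdot>\<^sub>v f b"
  obtains M M' where "m = n" "M \<in> carrier_mat n n" "M' \<in> carrier_mat n n"
    "M * M' = 1\<^sub>m n" "M' * M = 1\<^sub>m n" "\<And>b. b \<in> carrier_vec n \<Longrightarrow> M *\<^sub>v b = f b"
proof -
  define g where "g = inv_into (carrier_vec n) f"
  have f: "\<And>b. b \<in> carrier_vec n \<Longrightarrow> f b \<in> carrier_vec m"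
    and g: "\<And>d. d \<in> carrier_vec m \<Longrightarrow> g d \<in> carrier_vec n"
    and gf: "\<And>b. b \<in> carrier_vec n \<Longrightarrow> g (f b) = b"
    and fg: "\<And>d. d \<in> carrier_vec m \<Longrightarrow> f (g d) = d"
    unfolding g_def using bij bij_betw_inv_into[OF bij]
    by (auto simp: bij_betw_inv_into_left bij_betw_inv_into_right bij_betwE)
  have g_add: "g (c + d) = g c + g d" if "c \<in> carrier_vec m" "d \<in> carrier_vec m" for c d
    using that by (metis add add_carrier_vec fg g gf)
  have g_smult: "g (k \<cdot>\<^sub>v d) = k \<cdot>\<^sub>v g d" if "d \<in> carrier_vec m" for k d
    using that by (metis smult smult_carrier_vec fg g gf)
  obtain M where M: "M \<in> carrier_mat m n" "\<And>b. b \<in> carrier_vec n \<Longrightarrow> M *\<^sub>v b = f b"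
    using linear_vec_map_as_mat[of n f m] f add smult by blast
  obtain M' where M': "M' \<in> carrier_mat n m" "\<And>d. d \<in> carrier_vec m \<Longrightarrow> M' *\<^sub>v d = g d"
    using linear_vec_map_as_mat[of m g n] g g_add g_smult by blast
  have M'M: "M' * M = 1\<^sub>m n"
    by (rule eq_matI_mult_vec[of _ n n]) (use M M' f gf in \<open>auto\<close>)
  have MM': "M * M' = 1\<^sub>m m"
    by (rule eq_matI_mult_vec[of _ m m]) (use M M' g fg in \<open>auto\<close>)
  have "m = n"
    using right_inverse_mat_dim_le[OF M(1) M'(1) MM'] right_inverse_mat_dim_le[OF M'(1) M(1) M'M] by simp
  with M M' M'M MM' show thesis by (intro that) auto
qed

lemma bij_betw_aug_mat_zero: "bij_betw (aug_mat n (0\<^sub>m n n)) (carrier_vec n) (tilde n {0\<^sub>m n n})"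
  by (rule bij_betw_byWitness[where f' = "aug_col n"]) (auto intro: tildeI elim!: tildeE)

lemma bij_betw_aug_col: "bij_betw (aug_col n) (tilde n {0\<^sub>m n n}) (carrier_vec n)"
  by (rule bij_betw_byWitness[where f' = "aug_mat n (0\<^sub>m n n)"]) (auto intro: tildeI elim!: tildeE)

locale tilde_lie_iso =
  fixes n n' :: nat and V V' :: "'a::field mat set" and \<phi> :: "'a mat \<Rightarrow> 'a mat"
  assumes V: "comm_mat_space n V" and V': "comm_mat_space n' V'"
    and invertible: "\<exists>A\<in>V. invertible_mat A" and invertible': "\<exists>A\<in>V'. invertible_mat A"
    and iso: "lie_iso \<phi> (tilde n V) (tilde n' V')"
begin

definition \<sigma> :: "'a vec \<Rightarrow> 'a vec" where
  "\<sigma> c = aug_col n' (\<phi> (aug_mat n (0\<^sub>m n n) c))"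

definition \<rho> :: "'a mat \<Rightarrow> 'a mat" where
  "\<rho> A = aug_block n' (\<phi> (aug_mat n A (0\<^sub>v n)))"

lemma V_carrier: "V \<subseteq> carrier_mat n n" and V'_carrier: "V' \<subseteq> carrier_mat n' n'"
  and zero_mem: "0\<^sub>m n n \<in> V"
  using V V' unfolding comm_mat_space_def by auto

lemma phi_add: "x \<in> tilde n V \<Longrightarrow> y \<in> tilde n V \<Longrightarrow> \<phi> (x + y) = \<phi> x + \<phi> y"
  and phi_smult: "x \<in> tilde n V \<Longrightarrow> \<phi> (k \<cdot>\<^sub>m x) = k \<cdot>\<^sub>m \<phi> x"
  and phi_commutator: "x \<in> tilde n V \<Longrightarrow> y \<in> tilde n V \<Longrightarrow> \<phi> (x * y - y * x) = \<phi> x * \<phi> y - \<phi> y * \<phi> x"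
  and bij_betw_phi: "bij_betw \<phi> (tilde n V) (tilde n' V')"
  using iso unfolding lie_iso_def by auto

lemma bij_betw_phi_tilde_zero: "bij_betw \<phi> (tilde n {0\<^sub>m n n}) (tilde n' {0\<^sub>m n' n'})"
proof -
  obtain A where "A \<in> V" "invertible_mat A" using invertible by blast
  obtain A' where "A' \<in> V'" "invertible_mat A'" using invertible' by blast
  show ?thesis
  proof (rule bij_betw_subset[OF bij_betw_phi])
    show "tilde n {0\<^sub>m n n} \<subseteq> tilde n V" using zero_mem by (intro tilde_mono) simp
    show "\<phi> ` tilde n {0\<^sub>m n n} = tilde n' {0\<^sub>m n' n'}"
      using lie_iso_image_commutators[OF iso] commutators_tilde[OF V \<open>A \<in> V\<close> \<open>invertible_mat A\<close>]
        commutators_tilde[OF V' \<open>A' \<in> V'\<close> \<open>invertible_mat A'\<close>] by simp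
  qed
qed

lemma bij_betw_sigma: "bij_betw \<sigma> (carrier_vec n) (carrier_vec n')"
proof -
  have "\<sigma> = aug_col n' \<circ> (\<phi> \<circ> aug_mat n (0\<^sub>m n n))" unfolding \<sigma>_def by auto
  then show ?thesis
    using bij_betw_trans[OF bij_betw_trans[OF bij_betw_aug_mat_zero bij_betw_phi_tilde_zero] bij_betw_aug_col]
    by simp
qed

lemma sigma_carrier: "c \<in> carrier_vec n \<Longrightarrow> \<sigma> c \<in> carrier_vec n'"
  using bij_betw_sigma by (auto dest: bij_betwE)

lemma phi_aug_mat_zero: "c \<in> carrier_vec n \<Longrightarrow> \<phi> (aug_mat n (0\<^sub>m n n) c) = aug_mat n' (0\<^sub>m n' n') (\<sigma> c)"
proof -
  assume c: "c \<in> carrier_vec n"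
  then have "\<phi> (aug_mat n (0\<^sub>m n n) c) \<in> tilde n' {0\<^sub>m n' n'}"
    using bij_betw_phi_tilde_zero by (auto intro: tildeI dest: bij_betwE)
  then show ?thesis unfolding \<sigma>_def by (auto elim!: tildeE)
qed

lemma sigma_add:
  assumes b: "b \<in> carrier_vec n" and c: "c \<in> carrier_vec n"
  shows "\<sigma> (b + c) = \<sigma> b + \<sigma> c"
proof -
  have b0: "aug_mat n (0\<^sub>m n n) b \<in> tilde n V" and c0: "aug_mat n (0\<^sub>m n n) c \<in> tilde n V"
    using b c zero_mem by (auto intro: tildeI)
  have "aug_mat n' (0\<^sub>m n' n') (\<sigma> (b + c)) = \<phi> (aug_mat n (0\<^sub>m n n) b + aug_mat n (0\<^sub>m n n) c)"
    using b c by (simp add: aug_mat_add flip: phi_aug_mat_zero)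
  also have "\<dots> = aug_mat n' (0\<^sub>m n' n') (\<sigma> b) + aug_mat n' (0\<^sub>m n' n') (\<sigma> c)"
    using b c by (simp only: phi_add[OF b0 c0] phi_aug_mat_zero)
  also have "\<dots> = aug_mat n' (0\<^sub>m n' n') (\<sigma> b + \<sigma> c)"
    using b c by (simp add: aug_mat_add sigma_carrier)
  finally show ?thesis
    using b c by (simp add: aug_mat_inject sigma_carrier)
qed

lemma sigma_smult:
  assumes b: "b \<in> carrier_vec n"
  shows "\<sigma> (k \<cdot>\<^sub>v b) = k \<cdot>\<^sub>v \<sigma> b"
proof -
  have b0: "aug_mat n (0\<^sub>m n n) b \<in> tilde n V"
    using b zero_mem by (auto intro: tildeI)
  have "aug_mat n' (0\<^sub>m n' n') (\<sigma> (k \<cdot>\<^sub>v b)) = \<phi> (k \<cdot>\<^sub>m aug_mat n (0\<^sub>m n n) b)"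
    using b by (simp add: aug_mat_smult flip: phi_aug_mat_zero)
  also have "\<dots> = k \<cdot>\<^sub>m aug_mat n' (0\<^sub>m n' n') (\<sigma> b)"
    using b by (simp only: phi_smult[OF b0] phi_aug_mat_zero)
  also have "\<dots> = aug_mat n' (0\<^sub>m n' n') (k \<cdot>\<^sub>v \<sigma> b)"
    using b by (simp add: aug_mat_smult sigma_carrier)
  finally show ?thesis
    using b by (simp add: aug_mat_inject sigma_carrier)
qed

lemma phi_aug_mat_zero_vec:
  assumes "A \<in> V"
  obtains p where "p \<in> carrier_vec n'" "\<phi> (aug_mat n A (0\<^sub>v n)) = aug_mat n' (\<rho> A) p" "\<rho> A \<in> V'"
proof -
  have "aug_mat n A (0\<^sub>v n) \<in> tilde n V" using assms by (auto intro: tildeI)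
  then have "\<phi> (aug_mat n A (0\<^sub>v n)) \<in> tilde n' V'" using bij_betwE[OF bij_betw_phi] by blast
  then obtain P p where "\<phi> (aug_mat n A (0\<^sub>v n)) = aug_mat n' P p" "P \<in> V'" "p \<in> carrier_vec n'"
    by (rule tildeE)
  moreover from this V'_carrier have "\<rho> A = P" unfolding \<rho>_def by auto
  ultimately show thesis by (intro that) auto
qed

lemma rho_mem: "A \<in> V \<Longrightarrow> \<rho> A \<in> V'"
  by (rule phi_aug_mat_zero_vec)

lemma phi_aug_mat:
  assumes A: "A \<in> V" and a: "a \<in> carrier_vec n"
  obtains p where "p \<in> carrier_vec n'" "\<phi> (aug_mat n A a) = aug_mat n' (\<rho> A) p"
proof -
  obtain p where p: "p \<in> carrier_vec n'" "\<phi> (aug_mat n A (0\<^sub>v n)) = aug_mat n' (\<rho> A) p"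
    using phi_aug_mat_zero_vec[OF A] .
  have Ac: "A \<in> carrier_mat n n" and \<rho>A: "\<rho> A \<in> carrier_mat n' n'"
    using A rho_mem V_carrier V'_carrier by auto
  have "aug_mat n A a = aug_mat n A (0\<^sub>v n) + aug_mat n (0\<^sub>m n n) a"
    using Ac a by (simp add: aug_mat_add)
  then have "\<phi> (aug_mat n A a) = aug_mat n' (\<rho> A) p + aug_mat n' (0\<^sub>m n' n') (\<sigma> a)"
    using A a zero_mem by (simp add: phi_add tildeI p(2) phi_aug_mat_zero)
  also have "\<dots> = aug_mat n' (\<rho> A) (p + \<sigma> a)"
    using \<rho>A p a by (simp add: aug_mat_add sigma_carrier)
  finally show thesis using p(1) a by (intro that[of "p + \<sigma> a"]) (auto simp: sigma_carrier)
qed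

lemma sigma_intertwines:
  assumes A: "A \<in> V" and b: "b \<in> carrier_vec n"
  shows "\<sigma> (A *\<^sub>v b) = \<rho> A *\<^sub>v \<sigma> b"
proof -
  obtain p where p: "p \<in> carrier_vec n'" "\<phi> (aug_mat n A (0\<^sub>v n)) = aug_mat n' (\<rho> A) p"
    using phi_aug_mat_zero_vec[OF A] .
  have Ac: "A \<in> carrier_mat n n" and \<rho>A: "\<rho> A \<in> carrier_mat n' n'"
    using A rho_mem V_carrier V'_carrier by auto
  have x: "aug_mat n A (0\<^sub>v n) \<in> tilde n V" and y: "aug_mat n (0\<^sub>m n n) b \<in> tilde n V"
    using A b zero_mem by (auto intro: tildeI)
  have "aug_mat n (0\<^sub>m n n) (A *\<^sub>v b) =
        aug_mat n A (0\<^sub>v n) * aug_mat n (0\<^sub>m n n) b - aug_mat n (0\<^sub>m n n) b * aug_mat n A (0\<^sub>v n)"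
    using Ac b by (subst aug_mat_commutator) auto
  then have "aug_mat n' (0\<^sub>m n' n') (\<sigma> (A *\<^sub>v b)) =
        aug_mat n' (\<rho> A) p * aug_mat n' (0\<^sub>m n' n') (\<sigma> b) - aug_mat n' (0\<^sub>m n' n') (\<sigma> b) * aug_mat n' (\<rho> A) p"
    using Ac b by (simp add: phi_commutator[OF x y] p(2) phi_aug_mat_zero flip: phi_aug_mat_zero)
  also have "\<dots> = aug_mat n' (0\<^sub>m n' n') (\<rho> A *\<^sub>v \<sigma> b)"
    using \<rho>A p b by (subst aug_mat_commutator) (auto simp: sigma_carrier)
  finally show ?thesis
    using \<rho>A Ac b by (simp add: aug_mat_inject sigma_carrier)
qed

lemma rho_image: "\<rho> ` V = V'"
proof
  show "\<rho> ` V \<subseteq> V'" using rho_mem by auto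
  show "V' \<subseteq> \<rho> ` V"
  proof
    fix A' assume A': "A' \<in> V'"
    then have "aug_mat n' A' (0\<^sub>v n') \<in> \<phi> ` tilde n V"
      using bij_betw_phi by (auto simp: bij_betw_def intro: tildeI)
    then obtain A a where A: "A \<in> V" and a: "a \<in> carrier_vec n"
      and A'_eq: "aug_mat n' A' (0\<^sub>v n') = \<phi> (aug_mat n A a)"
      by (auto elim!: tildeE)
    obtain p where "p \<in> carrier_vec n'" "\<phi> (aug_mat n A a) = aug_mat n' (\<rho> A) p"
      using phi_aug_mat[OF A a] .
    moreover have "A' \<in> carrier_mat n' n'" "\<rho> A \<in> carrier_mat n' n'"
      using A' A rho_mem V'_carrier by auto
    ultimately have "A' = \<rho> A"
      using A'_eq by (auto simp: aug_mat_inject)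
    with A show "A' \<in> \<rho> ` V" by blast
  qed
qed

theorem similar_mat_spaces:
  "n = n' \<and> (\<exists>S T. S \<in> carrier_mat n n \<and> T \<in> carrier_mat n n \<and>
     S * T = 1\<^sub>m n \<and> T * S = 1\<^sub>m n \<and> (\<lambda>A. S * A * T) ` V = V')"
proof -
  obtain M M' where "n' = n" and M: "M \<in> carrier_mat n n" and M': "M' \<in> carrier_mat n n"
    and MM': "M * M' = 1\<^sub>m n" and M'M: "M' * M = 1\<^sub>m n"
    and M_sigma: "\<And>b. b \<in> carrier_vec n \<Longrightarrow> M *\<^sub>v b = \<sigma> b"
    using linear_bij_as_invertible_mat[OF bij_betw_sigma sigma_add sigma_smult] by blast
  have conj: "M * A * M' = \<rho> A" if A: "A \<in> V" for A
  proof -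
    have Ac: "A \<in> carrier_mat n n" and \<rho>A: "\<rho> A \<in> carrier_mat n n"
      using A rho_mem V_carrier V'_carrier \<open>n' = n\<close> by auto
    have "M * A = \<rho> A * M"
      by (rule eq_matI_mult_vec[of _ n n]) (use M Ac \<rho>A M_sigma sigma_intertwines[OF A] in auto)
    then have "M * A * M' = \<rho> A * (M * M')" using M M' \<rho>A by simp
    with MM' \<rho>A show ?thesis by simp
  qed
  have "(\<lambda>A. M * A * M') ` V = V'"
    using conj rho_image by (auto simp: image_iff)
  with \<open>n' = n\<close> M M' MM' M'M show ?thesis by blast
qed

end

definition aug_diag :: "nat \<Rightarrow> 'a::field mat \<Rightarrow> 'a mat" where
  "aug_diag n S = mat (n+1) (n+1)
     (\<lambda>(i,j). if i < n then if j < n then S $$ (i,j) else 0 else if j = n then 1 else 0)"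

lemma aug_diag_carrier [simp]: "aug_diag n S \<in> carrier_mat (n+1) (n+1)"
  and dim_aug_diag [simp]: "dim_row (aug_diag n S) = n+1" "dim_col (aug_diag n S) = n+1"
  unfolding aug_diag_def by auto

lemma index_aug_diag:
  "i < n+1 \<Longrightarrow> j < n+1 \<Longrightarrow>
   aug_diag n S $$ (i,j) = (if i < n then if j < n then S $$ (i,j) else 0 else if j = n then 1 else 0)"
  unfolding aug_diag_def by auto

lemma aug_diag_mult_aug_mat:
  assumes "S \<in> carrier_mat n n" "A \<in> carrier_mat n n" "a \<in> carrier_vec n"
  shows "aug_diag n S * aug_mat n A a = aug_mat n (S * A) (S *\<^sub>v a)"
  by (rule eq_matI)
    (use assms in \<open>auto simp: index_aug_diag index_aug_mat scalar_prod_def sum.atLeast0_lessThan_Suc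
      intro!: sum.cong\<close>)

lemma aug_mat_mult_aug_diag:
  assumes "A \<in> carrier_mat n n" "a \<in> carrier_vec n" "T \<in> carrier_mat n n"
  shows "aug_mat n A a * aug_diag n T = aug_mat n (A * T) a"
  by (rule eq_matI)
    (use assms in \<open>auto simp: index_aug_diag index_aug_mat scalar_prod_def sum.atLeast0_lessThan_Suc
      intro!: sum.cong\<close>)

lemma aug_diag_mult:
  assumes "S \<in> carrier_mat n n" "T \<in> carrier_mat n n"
  shows "aug_diag n S * aug_diag n T = aug_diag n (S * T)"
  by (rule eq_matI)
    (use assms in \<open>auto simp: index_aug_diag scalar_prod_def sum.atLeast0_lessThan_Suc intro!: sum.cong\<close>)

lemma aug_diag_one: "aug_diag n (1\<^sub>m n) = 1\<^sub>m (n+1)"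
  by (rule eq_matI) (auto simp: index_aug_diag)

lemma tilde_conjugate:
  assumes V: "V \<subseteq> carrier_mat n n" and S: "S \<in> carrier_mat n n" and T: "T \<in> carrier_mat n n"
    and ST: "S * T = 1\<^sub>m n"
  shows "(\<lambda>M. aug_diag n S * M * aug_diag n T) ` tilde n V = tilde n ((\<lambda>A. S * A * T) ` V)"
proof -
  have conj: "aug_diag n S * aug_mat n A a * aug_diag n T = aug_mat n (S * A * T) (S *\<^sub>v a)"
    if "A \<in> V" "a \<in> carrier_vec n" for A a
    using that V S T by (auto simp: aug_diag_mult_aug_mat aug_mat_mult_aug_diag)
  show ?thesis
  proof
    show "(\<lambda>M. aug_diag n S * M * aug_diag n T) ` tilde n V \<subseteq> tilde n ((\<lambda>A. S * A * T) ` V)"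
      using S by (auto simp: conj intro!: tildeI elim!: tildeE)
    show "tilde n ((\<lambda>A. S * A * T) ` V) \<subseteq> (\<lambda>M. aug_diag n S * M * aug_diag n T) ` tilde n V"
    proof
      fix y assume "y \<in> tilde n ((\<lambda>A. S * A * T) ` V)"
      then obtain A a where y: "y = aug_mat n (S * A * T) a" and A: "A \<in> V" and a: "a \<in> carrier_vec n"
        by (auto elim!: tildeE)
      have "S *\<^sub>v (T *\<^sub>v a) = a"
        using a S T ST by (simp flip: assoc_mult_mat_vec[OF S T a])
      then have "y = aug_diag n S * aug_mat n A (T *\<^sub>v a) * aug_diag n T"
        using y conj[OF A, of "T *\<^sub>v a"] T a by simp
      moreover have "aug_mat n A (T *\<^sub>v a) \<in> tilde n V" using A T a by (auto intro: tildeI)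
      ultimately show "y \<in> (\<lambda>M. aug_diag n S * M * aug_diag n T) ` tilde n V" by blast
    qed
  qed
qed

theorem theorem2:
  fixes V :: "'a::field mat set" and V' :: "'a mat set" and n n' :: nat
  assumes "\<not> (finite (UNIV :: 'a set) \<and> card (UNIV :: 'a set) = 2)"
    and "comm_mat_space n V" and "comm_mat_space n' V'"
    and "\<exists>A\<in>V. invertible_mat A" and "\<exists>A\<in>V'. invertible_mat A"
  shows "(lie_isomorphic (tilde n V) (tilde n' V')
           \<longleftrightarrow> (n = n' \<and> (\<exists>S T. S \<in> carrier_mat n n \<and> T \<in> carrier_mat n n \<and>
                 S * T = 1\<^sub>m n \<and> T * S = 1\<^sub>m n \<and> (\<lambda>A. S * A * T) ` V = V')))
       \<and> ((n = n' \<and> (\<exists>S T. S \<in> carrier_mat n n \<and> T \<in> carrier_mat n n \<and>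
                 S * T = 1\<^sub>m n \<and> T * S = 1\<^sub>m n \<and> (\<lambda>A. S * A * T) ` V = V'))
           \<longleftrightarrow> (n = n' \<and> (\<exists>R Q. R \<in> carrier_mat (n+1) (n+1) \<and> Q \<in> carrier_mat (n+1) (n+1) \<and>
                 R * Q = 1\<^sub>m (n+1) \<and> Q * R = 1\<^sub>m (n+1) \<and>
                 (\<lambda>M. R * M * Q) ` tilde n V = tilde n' V')))"
    (is "(?i \<longleftrightarrow> ?ii) \<and> (_ \<longleftrightarrow> ?iii)")
proof -
  have V: "V \<subseteq> carrier_mat n n" using assms(2) unfolding comm_mat_space_def by blast
  have "?i \<Longrightarrow> ?ii"
    unfolding lie_isomorphic_def
    using tilde_lie_iso.similar_mat_spaces[OF tilde_lie_iso.intro[OF assms(2-5)]] by blast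
  moreover have "?ii \<Longrightarrow> ?iii"
  proof (elim conjE exE)
    fix S T assume "n = n'" and S: "S \<in> carrier_mat n n" and T: "T \<in> carrier_mat n n"
      and "S * T = 1\<^sub>m n" "T * S = 1\<^sub>m n" and V': "(\<lambda>A. S * A * T) ` V = V'"
    then have "aug_diag n S * aug_diag n T = 1\<^sub>m (n+1)" "aug_diag n T * aug_diag n S = 1\<^sub>m (n+1)"
      by (simp_all add: aug_diag_mult aug_diag_one)
    moreover have "(\<lambda>M. aug_diag n S * M * aug_diag n T) ` tilde n V = tilde n' V'"
      using tilde_conjugate[OF V S T \<open>S * T = 1\<^sub>m n\<close>] V' \<open>n = n'\<close> by simp
    ultimately show ?iii using \<open>n = n'\<close> aug_diag_carrier by blast
  qed
  moreover have "?iii \<Longrightarrow> ?i"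
    unfolding lie_isomorphic_def using lie_iso_conjugation[OF tilde_carrier] by metis
  ultimately show ?thesis by blast
qed

end
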